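(* For $D,F\in\mathbb{R}$ let $S_{D,F}$ denote the system $\dot x=-y+xy$, $\dot y=x+Dx^2+Fy^2$. Let $D\in(-1,0)$. Then the period function of the center $(-1/D,0)$ of $S_{D,F}$ behaves as the period function of the center at the origin of $S_{-D-1,F}$: precisely, the change of variables $u=(Dx+1)/(D+1)$, $v=\sqrt{-D/(D+1)}\,y$ maps the periodic orbits around $(-1/D,0)$ of $S_{D,F}$ onto the periodic orbits around the origin of $S_{-D-1,F}$, and the minimal period of each such orbit of $S_{D,F}$ equals $\sqrt{-D/(D+1)}$ times the minimal period of the corresponding orbit of $S_{-D-1,F}$.
   Context: The period function of a center assigns to each periodic orbit in its period annulus (the largest punctured neighborhood of the center foliated by periodic orbits) its minimal period. *)

theory Defs
  imports "HOL-Analysis.Analysis"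
begin

definition sysDF :: "real \<Rightarrow> real \<Rightarrow> real \<times> real \<Rightarrow> real \<times> real" where
  "sysDF D F = (\<lambda>(x, y). (- y + x * y, x + D * x\<^sup>2 + F * y\<^sup>2))"

definition is_solution :: "(real \<times> real \<Rightarrow> real \<times> real) \<Rightarrow> (real \<Rightarrow> real \<times> real) \<Rightarrow> bool" where
  "is_solution f \<phi> \<longleftrightarrow> (\<forall>t. (\<phi> has_vector_derivative f (\<phi> t)) (at t))"

definition is_period :: "(real \<Rightarrow> 'a) \<Rightarrow> real \<Rightarrow> bool" where
  "is_period \<phi> T \<longleftrightarrow> T > 0 \<and> (\<forall>t. \<phi> (t + T) = \<phi> t)"

definition periodic_solution :: "(real \<times> real \<Rightarrow> real \<times> real) \<Rightarrow> (real \<Rightarrow> real \<times> real) \<Rightarrow> bool" where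
  "periodic_solution f \<phi> \<longleftrightarrow> is_solution f \<phi> \<and> (\<exists>T. is_period \<phi> T) \<and> \<not> (\<exists>c. \<forall>t. \<phi> t = c)"

definition min_period :: "(real \<Rightarrow> 'a) \<Rightarrow> real" where
  "min_period \<phi> = Inf {T. is_period \<phi> T}"

definition periodic_orbit :: "(real \<times> real \<Rightarrow> real \<times> real) \<Rightarrow> (real \<times> real) set \<Rightarrow> bool" where
  "periodic_orbit f \<Gamma> \<longleftrightarrow> (\<exists>\<phi>. periodic_solution f \<phi> \<and> \<Gamma> = range \<phi>)"

text \<open>Minimal period of a periodic orbit (independent of the chosen parametrisation).\<close>
definition orbit_period :: "(real \<times> real \<Rightarrow> real \<times> real) \<Rightarrow> (real \<times> real) set \<Rightarrow> real" where
  "orbit_period f \<Gamma> = (THE T. \<exists>\<phi>. periodic_solution f \<phi> \<and> range \<phi> = \<Gamma> \<and> min_period \<phi> = T)"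

text \<open>Period annulus of the center p: the largest punctured (connected, open) neighbourhood
  of p foliated by periodic orbits, i.e. the union of all connected open U containing p such that
  U - {p} is a union of periodic orbits, with p removed.\<close>
definition period_annulus :: "(real \<times> real \<Rightarrow> real \<times> real) \<Rightarrow> real \<times> real \<Rightarrow> (real \<times> real) set" where
  "period_annulus f p =
     \<Union>{U. open U \<and> connected U \<and> p \<in> U \<and>
          (\<forall>q \<in> U - {p}. \<exists>\<Gamma>. periodic_orbit f \<Gamma> \<and> q \<in> \<Gamma> \<and> \<Gamma> \<subseteq> U - {p})} - {p}"

definition annulus_orbits :: "(real \<times> real \<Rightarrow> real \<times> real) \<Rightarrow> real \<times> real \<Rightarrow> (real \<times> real) set set" where
  "annulus_orbits f p = {\<Gamma>. periodic_orbit f \<Gamma> \<and> \<Gamma> \<subseteq> period_annulus f p}"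

end

theory Submission
  imports Defs
begin

text \<open>The affine map \<open>h (x, y) = ((D x + 1) / (D + 1), k y)\<close>, \<open>k = sqrt (- D / (D + 1))\<close>,
  conjugates the two vector fields up to the constant factor \<open>k\<close>: the field of \<open>S(-D-1, F)\<close>
  at \<open>h z\<close> is \<open>k\<close> times the image under the linear part of \<open>h\<close> of the field of \<open>S(D, F)\<close>
  at \<open>z\<close>. Hence \<open>s \<mapsto> h (\<phi> (k s))\<close> solves \<open>S(-D-1, F)\<close> whenever \<open>\<phi>\<close> solves
  \<open>S(D, F)\<close>, so \<open>h\<close> and its inverse exchange the periodic orbits of the two systems and
  divide minimal periods by \<open>k\<close>; being a homeomorphism of the plane, \<open>h\<close> also maps the period
  annulus of \<open>(-1/D, 0)\<close> onto that of \<open>h (-1/D, 0) = (0, 0)\<close>. The minimal period of an orbit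
  does not depend on its parametrisation because solutions are unique: the vector fields are
  Lipschitz on balls, and Gronwall's argument applies to \<open>|\<phi> - \<psi>|\<^sup>2\<close>.\<close>

lemma is_solution_reparam:
  assumes "is_solution f \<phi>"
  shows "is_solution (\<lambda>z. c *\<^sub>R f z) (\<lambda>s. \<phi> (c * s + t0))"
  unfolding is_solution_def
proof
  fix s
  have "((\<lambda>s. c * s + t0) has_vector_derivative c) (at s)"
    by (auto intro!: derivative_eq_intros simp flip: has_real_derivative_iff_has_vector_derivative)
  from vector_diff_chain_at[OF this] assms
  show "((\<lambda>s. \<phi> (c * s + t0)) has_vector_derivative c *\<^sub>R f (\<phi> (c * s + t0))) (at s)"
    unfolding is_solution_def o_def by blast
qed

lemma is_solution_continuous_on:
  "is_solution f \<phi> \<Longrightarrow> continuous_on S \<phi>"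
  unfolding is_solution_def
  by (intro continuous_at_imp_continuous_on ballI has_vector_derivative_continuous) auto

lemma is_solution_affine_image:
  assumes "linear L" and conj: "\<And>z. g (L z + b) = L (f z)" and "is_solution f \<phi>"
  shows "is_solution g (\<lambda>s. L (\<phi> s) + b)"
  unfolding is_solution_def
proof
  fix s
  have "bounded_linear L" using \<open>linear L\<close> by (simp add: linear_conv_bounded_linear)
  moreover have "(\<phi> has_derivative (\<lambda>r. r *\<^sub>R f (\<phi> s))) (at s)"
    using assms(3) by (simp add: is_solution_def has_vector_derivative_def)
  ultimately have "((\<lambda>s. L (\<phi> s) + b) has_derivative (\<lambda>r. L (r *\<^sub>R f (\<phi> s)))) (at s)"
    by (rule has_derivative_add_const[OF bounded_linear.has_derivative])
  moreover have "(\<lambda>r. L (r *\<^sub>R f (\<phi> s))) = (\<lambda>r. r *\<^sub>R g (L (\<phi> s) + b))"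
    by (simp add: linear_scale[OF \<open>linear L\<close>] conj)
  ultimately show "((\<lambda>s. L (\<phi> s) + b) has_vector_derivative g (L (\<phi> s) + b)) (at s)"
    by (simp add: has_vector_derivative_def)
qed

lemma nonneg_eq_0_if_deriv_le_linear:
  fixes w w' :: "real \<Rightarrow> real"
  assumes "0 \<le> t" and "w 0 = 0" and "0 \<le> w t"
    and deriv: "\<And>s. 0 \<le> s \<Longrightarrow> s \<le> t \<Longrightarrow> (w has_real_derivative w' s) (at s)"
    and bound: "\<And>s. 0 \<le> s \<Longrightarrow> s \<le> t \<Longrightarrow> w' s \<le> K * w s"
  shows "w t = 0"
proof -
  have "exp (- K * t) * w t \<le> exp (- K * 0) * w 0"
  proof (rule DERIV_nonpos_imp_nonincreasing[OF \<open>0 \<le> t\<close>])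
    fix s assume s: "0 \<le> s" "s \<le> t"
    have "((\<lambda>s. exp (- K * s) * w s) has_real_derivative exp (- K * s) * (w' s - K * w s)) (at s)"
      by (auto intro!: derivative_eq_intros deriv s simp: algebra_simps)
    moreover have "exp (- K * s) * (w' s - K * w s) \<le> 0"
      using bound[OF s] by (simp add: mult_nonneg_nonpos)
    ultimately show "\<exists>y. ((\<lambda>s. exp (- K * s) * w s) has_real_derivative y) (at s) \<and> y \<le> 0"
      by blast
  qed
  then show ?thesis using \<open>w 0 = 0\<close> \<open>0 \<le> w t\<close> by (simp add: mult_le_0_iff)
qed

lemma is_solution_bounded:
  assumes "is_solution f \<phi>"
  shows "\<exists>R. \<forall>s \<in> {a..b}. norm (\<phi> s) \<le> R"
  using compact_imp_bounded[OF compact_continuous_image[OF is_solution_continuous_on[OF assms]]]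
  by (auto simp: bounded_iff)

lemma has_real_derivative_inner_self:
  assumes "(d has_vector_derivative v) (at s)"
  shows "((\<lambda>s. inner (d s) (d s)) has_real_derivative 2 * inner (d s) v) (at s)"
proof -
  have deriv: "(d has_derivative (\<lambda>r. r *\<^sub>R v)) (at s)"
    using assms by (simp add: has_vector_derivative_def)
  have "((\<lambda>s. inner (d s) (d s)) has_derivative (\<lambda>r. inner (d s) (r *\<^sub>R v) + inner (r *\<^sub>R v) (d s))) (at s)"
    by (rule has_derivative_inner[OF deriv deriv])
  moreover have "(\<lambda>r. inner (d s) (r *\<^sub>R v) + inner (r *\<^sub>R v) (d s)) = (*) (2 * inner (d s) v)"
    by (auto simp: fun_eq_iff inner_commute)
  ultimately show ?thesis by (simp add: has_field_derivative_def)
qed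

lemma is_solution_unique_forward:
  assumes lip: "\<And>R. \<exists>K. K-lipschitz_on (cball 0 R) f"
    and \<phi>: "is_solution f \<phi>" and \<psi>: "is_solution f \<psi>"
    and "\<phi> 0 = \<psi> 0" and "0 \<le> t"
  shows "\<phi> t = \<psi> t"
proof -
  obtain R\<^sub>1 R\<^sub>2 where R: "\<forall>s \<in> {0..t}. norm (\<phi> s) \<le> R\<^sub>1" "\<forall>s \<in> {0..t}. norm (\<psi> s) \<le> R\<^sub>2"
    using is_solution_bounded[OF \<phi>] is_solution_bounded[OF \<psi>] by metis
  have in_cball: "\<phi> s \<in> cball 0 (max R\<^sub>1 R\<^sub>2) \<and> \<psi> s \<in> cball 0 (max R\<^sub>1 R\<^sub>2)" if "0 \<le> s" "s \<le> t" for s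
  proof -
    have "norm (\<phi> s) \<le> R\<^sub>1" and "norm (\<psi> s) \<le> R\<^sub>2" using R that by auto
    then show ?thesis by (simp add: le_max_iff_disj)
  qed
  obtain K where K: "K-lipschitz_on (cball 0 (max R\<^sub>1 R\<^sub>2)) f" using lip by blast
  define w where "w s = inner (\<phi> s - \<psi> s) (\<phi> s - \<psi> s)" for s
  have w_deriv: "(w has_real_derivative 2 * inner (\<phi> s - \<psi> s) (f (\<phi> s) - f (\<psi> s))) (at s)" for s
    unfolding w_def[abs_def] using \<phi> \<psi>
    by (intro has_real_derivative_inner_self has_vector_derivative_diff) (simp_all add: is_solution_def)
  have w_deriv_bound: "2 * inner (\<phi> s - \<psi> s) (f (\<phi> s) - f (\<psi> s)) \<le> 2 * K * w s"
    if "0 \<le> s" "s \<le> t" for s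
  proof -
    have "inner (\<phi> s - \<psi> s) (f (\<phi> s) - f (\<psi> s)) \<le> norm (\<phi> s - \<psi> s) * norm (f (\<phi> s) - f (\<psi> s))"
      by (rule norm_cauchy_schwarz)
    also have "\<dots> \<le> norm (\<phi> s - \<psi> s) * (K * norm (\<phi> s - \<psi> s))"
      using lipschitz_on_normD[OF K] in_cball[OF that] by (simp add: mult_left_mono)
    also have "\<dots> = K * w s" by (simp add: w_def dot_square_norm power2_eq_square mult_ac)
    finally show ?thesis by simp
  qed
  have "w t = 0"
  proof (rule nonneg_eq_0_if_deriv_le_linear[OF \<open>0 \<le> t\<close> _ _ w_deriv w_deriv_bound])
    show "w 0 = 0" using \<open>\<phi> 0 = \<psi> 0\<close> by (simp add: w_def)
  qed (simp add: w_def)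
  then show ?thesis by (simp add: w_def)
qed

lemma is_solution_unique:
  assumes lip: "\<And>R. \<exists>K. K-lipschitz_on (cball 0 R) f"
    and \<phi>: "is_solution f \<phi>" and \<psi>: "is_solution f \<psi>" and "\<phi> 0 = \<psi> 0"
  shows "\<phi> t = \<psi> t"
proof (cases "0 \<le> t")
  case True
  then show ?thesis using is_solution_unique_forward[OF lip \<phi> \<psi> \<open>\<phi> 0 = \<psi> 0\<close>] by blast
next
  case False
  \<comment> \<open>Reverse time: \<open>s \<mapsto> \<phi> (- s)\<close> and \<open>s \<mapsto> \<psi> (- s)\<close> solve \<open>z' = - f z\<close>.\<close>
  have "\<exists>K. K-lipschitz_on (cball 0 R) (\<lambda>z. (- 1) *\<^sub>R f z)" for R
    using lip[of R] by (auto intro: lipschitz_on_minus)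
  from is_solution_unique_forward[OF this is_solution_reparam[OF \<phi>, of "- 1" 0]
      is_solution_reparam[OF \<psi>, of "- 1" 0], of "- t"]
  show ?thesis using False \<open>\<phi> 0 = \<psi> 0\<close> by simp
qed

lemma is_period_reparam:
  fixes c :: real
  assumes "inj h" and "c > 0"
  shows "is_period (\<lambda>s. h (\<phi> (c * s + t0))) P \<longleftrightarrow> is_period \<phi> (c * P)"
proof -
  have "(\<forall>s. \<phi> (c * (s + P) + t0) = \<phi> (c * s + t0)) \<longleftrightarrow> (\<forall>t. \<phi> (t + c * P) = \<phi> t)"
  proof
    assume shifted: "\<forall>s. \<phi> (c * (s + P) + t0) = \<phi> (c * s + t0)"
    show "\<forall>t. \<phi> (t + c * P) = \<phi> t"
    proof
      fix t
      have "c * ((t - t0) / c + P) + t0 = t + c * P" and "c * ((t - t0) / c) + t0 = t"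
        using \<open>c > 0\<close> by (simp_all add: field_simps)
      then show "\<phi> (t + c * P) = \<phi> t" using shifted[rule_format, of "(t - t0) / c"] by simp
    qed
  next
    assume periodic: "\<forall>t. \<phi> (t + c * P) = \<phi> t"
    show "\<forall>s. \<phi> (c * (s + P) + t0) = \<phi> (c * s + t0)"
    proof
      fix s
      have "c * (s + P) + t0 = (c * s + t0) + c * P" by (simp add: algebra_simps)
      then show "\<phi> (c * (s + P) + t0) = \<phi> (c * s + t0)"
        using periodic[rule_format, of "c * s + t0"] by (simp only:)
    qed
  qed
  then show ?thesis
    using \<open>c > 0\<close> \<open>inj h\<close> by (simp add: is_period_def inj_eq zero_less_mult_iff)
qed

lemma range_reparam:
  fixes c :: real
  assumes "c \<noteq> 0"
  shows "range (\<lambda>s. h (\<phi> (c * s + t0))) = h ` range \<phi>"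
proof -
  have "surj (\<lambda>s. c * s + t0)"
    by (rule surjI[where f = "\<lambda>t. (t - t0) / c"]) (use assms in simp)
  then show ?thesis by (metis image_image)
qed

lemma min_period_reparam:
  assumes "inj h" and "c > 0" and "\<exists>T. is_period \<phi> T"
  shows "min_period \<phi> = c * min_period (\<lambda>s. h (\<phi> (c * s + t0)))"
proof -
  let ?P = "{P. is_period (\<lambda>s. h (\<phi> (c * s + t0))) P}"
  have periods: "{T. is_period \<phi> T} = (*) c ` ?P"
  proof (intro set_eqI iffI)
    fix T assume "T \<in> {T. is_period \<phi> T}"
    then have "T / c \<in> ?P" and "T = c * (T / c)"
      using is_period_reparam[OF assms(1,2)] \<open>c > 0\<close> by simp_all
    then show "T \<in> (*) c ` ?P" by (rule rev_image_eqI)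
  next
    fix T assume "T \<in> (*) c ` ?P"
    then show "T \<in> {T. is_period \<phi> T}" using is_period_reparam[OF assms(1,2)] by blast
  qed
  have "mono ((*) c)" using \<open>c > 0\<close> by (auto intro: monoI)
  moreover have "continuous (at_right (Inf ?P)) ((*) c)" by (intro continuous_intros)
  moreover have "?P \<noteq> {}" using periods assms(3) by auto
  moreover have "bdd_below ?P" by (rule bdd_belowI[where m = 0]) (simp add: is_period_def)
  ultimately have "c * Inf ?P = Inf ((*) c ` ?P)"
    by (rule continuous_at_Inf_mono)
  then show ?thesis by (simp add: min_period_def periods)
qed

lemma periodic_solution_reparam:
  assumes "inj h" and "c > 0" and "periodic_solution f \<phi>"
    and "is_solution g (\<lambda>s. h (\<phi> (c * s + t0)))"
  shows "periodic_solution g (\<lambda>s. h (\<phi> (c * s + t0)))"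
  unfolding periodic_solution_def
proof (intro conjI)
  obtain T where "is_period \<phi> T" using \<open>periodic_solution f \<phi>\<close> by (auto simp: periodic_solution_def)
  then have "is_period \<phi> (c * (T / c))" using \<open>c > 0\<close> by simp
  then have "is_period (\<lambda>s. h (\<phi> (c * s + t0))) (T / c)"
    by (simp only: is_period_reparam[OF assms(1,2)])
  then show "\<exists>P. is_period (\<lambda>s. h (\<phi> (c * s + t0))) P" ..
  show "\<not> (\<exists>C. \<forall>s. h (\<phi> (c * s + t0)) = C)"
  proof
    assume "\<exists>C. \<forall>s. h (\<phi> (c * s + t0)) = C"
    then obtain C where C: "\<forall>s. h (\<phi> (c * s + t0)) = C" by blast
    have "c * ((t - t0) / c) + t0 = t" for t using \<open>c > 0\<close> by simp
    then have "h (\<phi> t) = C" for t using C by metis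
    then have "\<forall>t. \<phi> t = \<phi> 0" using \<open>inj h\<close> by (metis injD)
    then show False using \<open>periodic_solution f \<phi>\<close> unfolding periodic_solution_def by blast
  qed
qed (fact assms(4))

lemma orbit_period_eq_min_period:
  assumes lip: "\<And>R. \<exists>K. K-lipschitz_on (cball 0 R) f" and "periodic_solution f \<phi>"
  shows "orbit_period f (range \<phi>) = min_period \<phi>"
  unfolding orbit_period_def
proof (rule the_equality)
  show "\<exists>\<psi>. periodic_solution f \<psi> \<and> range \<psi> = range \<phi> \<and> min_period \<psi> = min_period \<phi>"
    using assms(2) by blast
next
  fix T assume "\<exists>\<psi>. periodic_solution f \<psi> \<and> range \<psi> = range \<phi> \<and> min_period \<psi> = T"
  then obtain \<psi> where \<psi>: "periodic_solution f \<psi>" "range \<psi> = range \<phi>" and "min_period \<psi> = T"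
    by blast
  obtain t0 where "\<psi> 0 = \<phi> t0" using \<psi>(2) by (metis rangeE rangeI)
  have \<phi>_sol: "is_solution f \<phi>" and \<psi>_sol: "is_solution f \<psi>"
    using assms(2) \<psi>(1) by (simp_all add: periodic_solution_def)
  have shifted_sol: "is_solution f (\<lambda>s. \<phi> (s + t0))"
    using is_solution_reparam[OF \<phi>_sol, of 1 t0] by simp
  have "\<psi> = (\<lambda>s. \<phi> (s + t0))"
  proof
    fix s
    show "\<psi> s = \<phi> (s + t0)"
      using is_solution_unique[OF lip \<psi>_sol shifted_sol, of s] \<open>\<psi> 0 = \<phi> t0\<close> by simp
  qed
  moreover have "min_period \<phi> = min_period (\<lambda>s. \<phi> (s + t0))"
    using min_period_reparam[of id 1 \<phi> t0] assms(2) by (simp add: periodic_solution_def)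
  ultimately show "T = min_period \<phi>"
    using \<open>min_period \<psi> = T\<close> by simp
qed

lemma periodic_solution_affine_conj:
  assumes "linear L" and "inj L" and "c > 0"
    and conj: "\<And>z. g (L z + b) = c *\<^sub>R L (f z)" and "periodic_solution f \<phi>"
  shows "periodic_solution g (\<lambda>s. L (\<phi> (c * s)) + b)"
proof -
  have "is_solution (\<lambda>z. c *\<^sub>R f z) (\<lambda>s. \<phi> (c * s))"
    using is_solution_reparam[of f \<phi> c 0] assms(5) by (simp add: periodic_solution_def)
  moreover have "g (L z + b) = L (c *\<^sub>R f z)" for z
    by (simp add: conj linear_scale[OF \<open>linear L\<close>])
  ultimately have "is_solution g (\<lambda>s. L (\<phi> (c * s)) + b)"
    by (intro is_solution_affine_image[OF \<open>linear L\<close>])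
  moreover have "inj (\<lambda>z. L z + b)" using \<open>inj L\<close> by (simp add: inj_on_def)
  ultimately show ?thesis
    using periodic_solution_reparam[of "\<lambda>z. L z + b" c f \<phi> g 0] assms(3,5) by simp
qed

lemma periodic_orbit_affine_conj:
  assumes "linear L" and "inj L" and "c > 0"
    and conj: "\<And>z. g (L z + b) = c *\<^sub>R L (f z)" and "periodic_orbit f \<Gamma>"
  shows "periodic_orbit g ((\<lambda>z. L z + b) ` \<Gamma>)"
proof -
  obtain \<phi> where \<phi>: "periodic_solution f \<phi>" and "\<Gamma> = range \<phi>"
    using \<open>periodic_orbit f \<Gamma>\<close> by (auto simp: periodic_orbit_def)
  then have "(\<lambda>z. L z + b) ` \<Gamma> = range (\<lambda>s. L (\<phi> (c * s)) + b)"
    using range_reparam[of c "\<lambda>z. L z + b" \<phi> 0] \<open>c > 0\<close> by simp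
  then show ?thesis
    using periodic_solution_affine_conj[OF assms(1-4) \<phi>] unfolding periodic_orbit_def by blast
qed

lemma orbit_period_affine_conj:
  assumes lip_f: "\<And>R. \<exists>K. K-lipschitz_on (cball 0 R) f"
    and lip_g: "\<And>R. \<exists>K. K-lipschitz_on (cball 0 R) g"
    and "linear L" and "inj L" and "c > 0"
    and conj: "\<And>z. g (L z + b) = c *\<^sub>R L (f z)" and "periodic_orbit f \<Gamma>"
  shows "orbit_period f \<Gamma> = c * orbit_period g ((\<lambda>z. L z + b) ` \<Gamma>)"
proof -
  obtain \<phi> where \<phi>: "periodic_solution f \<phi>" and \<Gamma>: "\<Gamma> = range \<phi>"
    using \<open>periodic_orbit f \<Gamma>\<close> by (auto simp: periodic_orbit_def)
  define \<psi> where "\<psi> = (\<lambda>s. L (\<phi> (c * s)) + b)"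
  have \<psi>: "periodic_solution g \<psi>"
    unfolding \<psi>_def using periodic_solution_affine_conj[OF assms(3-6) \<phi>] .
  have "(\<lambda>z. L z + b) ` \<Gamma> = range \<psi>"
    unfolding \<psi>_def \<Gamma> using range_reparam[of c "\<lambda>z. L z + b" \<phi> 0] \<open>c > 0\<close> by simp
  moreover have "inj (\<lambda>z. L z + b)" using \<open>inj L\<close> by (simp add: inj_on_def)
  then have "min_period \<phi> = c * min_period \<psi>"
    using min_period_reparam[of "\<lambda>z. L z + b" c \<phi> 0] \<open>c > 0\<close> \<phi>
    by (simp add: \<psi>_def periodic_solution_def)
  ultimately show ?thesis
    using orbit_period_eq_min_period[OF lip_f \<phi>] orbit_period_eq_min_period[OF lip_g \<psi>] \<Gamma> by simp
qed

lemma affine_conj_inverse: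
  assumes "linear L" and "linear L'" and "\<And>v. L' (L v) = v" and "\<And>v. L (L' v) = v"
    and "c \<noteq> 0" and conj: "\<And>z. g (L z + b) = c *\<^sub>R L (f z)"
  shows "f (L' z + - L' b) = inverse c *\<^sub>R L' (g z)"
proof -
  have "L (L' z + - L' b) + b = z"
    using assms(4) by (simp add: linear_diff[OF \<open>linear L\<close>])
  then have "g z = c *\<^sub>R L (f (L' z + - L' b))" by (metis conj)
  then have "L' (g z) = c *\<^sub>R f (L' z + - L' b)"
    by (simp add: linear_scale[OF \<open>linear L'\<close>] assms(3))
  then show ?thesis using \<open>c \<noteq> 0\<close> by simp
qed

lemma period_annulus_homeomorphic_image:
  assumes hom: "homeomorphism UNIV UNIV h k"
    and orbits: "\<And>\<Gamma>. periodic_orbit f \<Gamma> \<Longrightarrow> periodic_orbit g (h ` \<Gamma>)"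
  shows "h ` period_annulus f p \<subseteq> period_annulus g (h p)"
proof
  fix q assume "q \<in> h ` period_annulus f p"
  then obtain x U where q: "q = h x" "x \<in> U" "x \<noteq> p" and U: "open U" "connected U" "p \<in> U"
    and foliated: "\<forall>y \<in> U - {p}. \<exists>\<Gamma>. periodic_orbit f \<Gamma> \<and> y \<in> \<Gamma> \<and> \<Gamma> \<subseteq> U - {p}"
    unfolding period_annulus_def by blast
  have "inj h" by (rule inj_on_inverseI[where g = k]) (simp add: homeomorphism_apply1[OF hom])
  have "open (h ` U)"
    using homeomorphism_imp_open_map[OF hom, of U] U(1) by simp
  moreover have "connected (h ` U)"
    using continuous_on_subset[OF homeomorphism_cont1[OF hom] subset_UNIV] U(2)
    by (rule connected_continuous_image)
  moreover have diff: "h ` U - {h p} = h ` (U - {p})"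
    using \<open>inj h\<close> by (simp add: image_set_diff)
  moreover have "\<forall>y \<in> h ` U - {h p}. \<exists>\<Delta>. periodic_orbit g \<Delta> \<and> y \<in> \<Delta> \<and> \<Delta> \<subseteq> h ` U - {h p}"
  proof
    fix y assume "y \<in> h ` U - {h p}"
    then obtain y0 where "y = h y0" "y0 \<in> U - {p}" using diff by auto
    then obtain \<Gamma> where "periodic_orbit f \<Gamma>" "y0 \<in> \<Gamma>" "\<Gamma> \<subseteq> U - {p}" using foliated by blast
    then show "\<exists>\<Delta>. periodic_orbit g \<Delta> \<and> y \<in> \<Delta> \<and> \<Delta> \<subseteq> h ` U - {h p}"
      using orbits \<open>y = h y0\<close> diff by blast
  qed
  moreover have "q \<in> h ` U - {h p}" using q \<open>inj h\<close> by (auto simp: inj_eq)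
  ultimately show "q \<in> period_annulus g (h p)"
    using U(3) unfolding period_annulus_def by blast
qed

lemma annulus_orbits_homeomorphic_image:
  assumes hom: "homeomorphism UNIV UNIV h k"
    and orbits_f: "\<And>\<Gamma>. periodic_orbit f \<Gamma> \<Longrightarrow> periodic_orbit g (h ` \<Gamma>)"
    and orbits_g: "\<And>\<Gamma>. periodic_orbit g \<Gamma> \<Longrightarrow> periodic_orbit f (k ` \<Gamma>)"
  shows "(\<lambda>\<Gamma>. h ` \<Gamma>) ` annulus_orbits f p = annulus_orbits g (h p)"
proof -
  have kh: "k (h z) = z" and hk: "h (k z) = z" for z
    using homeomorphism_apply1[OF hom] homeomorphism_apply2[OF hom] by simp_all
  have "k ` period_annulus g (h p) \<subseteq> period_annulus f p"
    using period_annulus_homeomorphic_image[of k h g f "h p", OF homeomorphism_symD[OF hom] orbits_g] kh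
    by simp
  then have "h ` k ` period_annulus g (h p) \<subseteq> h ` period_annulus f p" by (rule image_mono)
  then have "period_annulus g (h p) \<subseteq> h ` period_annulus f p" using hk by (simp add: image_image)
  with period_annulus_homeomorphic_image[OF hom orbits_f]
  have annulus: "period_annulus g (h p) = h ` period_annulus f p" by blast
  show ?thesis
  proof (intro set_eqI iffI)
    fix \<Delta> assume "\<Delta> \<in> (\<lambda>\<Gamma>. h ` \<Gamma>) ` annulus_orbits f p"
    then obtain \<Gamma> where "\<Delta> = h ` \<Gamma>" "periodic_orbit f \<Gamma>" "\<Gamma> \<subseteq> period_annulus f p"
      by (auto simp: annulus_orbits_def)
    then show "\<Delta> \<in> annulus_orbits g (h p)"
      by (simp add: annulus_orbits_def annulus image_mono orbits_f)
  next
    fix \<Delta> assume "\<Delta> \<in> annulus_orbits g (h p)"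
    then have "periodic_orbit g \<Delta>" and "\<Delta> \<subseteq> h ` period_annulus f p"
      by (simp_all add: annulus_orbits_def annulus)
    then have "k ` \<Delta> \<in> annulus_orbits f p"
      using orbits_g kh by (force simp: annulus_orbits_def)
    moreover have "\<Delta> = h ` k ` \<Delta>" using hk by (simp add: image_image)
    ultimately show "\<Delta> \<in> (\<lambda>\<Gamma>. h ` \<Gamma>) ` annulus_orbits f p" by blast
  qed
qed

lemma annulus_orbits_affine_conj:
  fixes L L' :: "real \<times> real \<Rightarrow> real \<times> real"
  assumes lip_f: "\<And>R. \<exists>K. K-lipschitz_on (cball 0 R) f"
    and lip_g: "\<And>R. \<exists>K. K-lipschitz_on (cball 0 R) g"
    and "linear L" and "linear L'" and L'L: "\<And>v. L' (L v) = v" and LL': "\<And>v. L (L' v) = v"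
    and "c > 0" and conj: "\<And>z. g (L z + b) = c *\<^sub>R L (f z)"
  shows "(\<lambda>\<Gamma>. (\<lambda>z. L z + b) ` \<Gamma>) ` annulus_orbits f p = annulus_orbits g (L p + b)
    \<and> (\<forall>\<Gamma> \<in> annulus_orbits f p. orbit_period f \<Gamma> = c * orbit_period g ((\<lambda>z. L z + b) ` \<Gamma>))"
proof
  have "inj L" and "inj L'" by (metis L'L injI, metis LL' injI)
  have "homeomorphism UNIV UNIV (\<lambda>z. L z + b) (\<lambda>z. L' z + - L' b)"
  proof (rule homeomorphismI)
    have "bounded_linear L" and "bounded_linear L'"
      using \<open>linear L\<close> \<open>linear L'\<close> by (simp_all add: linear_conv_bounded_linear)
    then show "continuous_on UNIV (\<lambda>z. L z + b)" and "continuous_on UNIV (\<lambda>z. L' z + - L' b)"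
      by (simp_all add: linear_continuous_on continuous_on_add continuous_on_diff)
    show "L' (L z + b) + - L' b = z" and "L (L' z + - L' b) + b = z" for z
      using L'L LL' by (simp_all add: linear_add[OF \<open>linear L'\<close>] linear_diff[OF \<open>linear L\<close>])
  qed auto
  moreover have "c \<noteq> 0" using \<open>c > 0\<close> by simp
  then have "f (L' z + - L' b) = inverse c *\<^sub>R L' (g z)" for z
    by (rule affine_conj_inverse[where f = f and g = g and b = b, OF \<open>linear L\<close> \<open>linear L'\<close> L'L LL' _ conj])
  ultimately show "(\<lambda>\<Gamma>. (\<lambda>z. L z + b) ` \<Gamma>) ` annulus_orbits f p = annulus_orbits g (L p + b)"
    using periodic_orbit_affine_conj[where f = f and g = g and b = b,
        OF \<open>linear L\<close> \<open>inj L\<close> \<open>c > 0\<close> conj]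
      periodic_orbit_affine_conj[where f = g and g = f and b = "- L' b" and c = "inverse c",
        OF \<open>linear L'\<close> \<open>inj L'\<close>] \<open>c > 0\<close>
    by (intro annulus_orbits_homeomorphic_image) auto
  show "\<forall>\<Gamma> \<in> annulus_orbits f p. orbit_period f \<Gamma> = c * orbit_period g ((\<lambda>z. L z + b) ` \<Gamma>)"
    using orbit_period_affine_conj[where b = b, OF lip_f lip_g \<open>linear L\<close> \<open>inj L\<close> \<open>c > 0\<close> conj]
    by (simp add: annulus_orbits_def)
qed

lemma abs_mult_add_mult_le:
  fixes a b u v :: real
  assumes "\<bar>a\<bar> \<le> A" and "\<bar>b\<bar> \<le> B" and "\<bar>u\<bar> \<le> d" and "\<bar>v\<bar> \<le> d"
  shows "\<bar>a * u + b * v\<bar> \<le> (A + B) * d"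
proof -
  have "\<bar>a * u + b * v\<bar> \<le> \<bar>a\<bar> * \<bar>u\<bar> + \<bar>b\<bar> * \<bar>v\<bar>"
    by (metis abs_mult abs_triangle_ineq)
  also have "\<dots> \<le> A * d + B * d"
    using assms by (intro add_mono mult_mono) auto
  finally show ?thesis by (simp add: distrib_right)
qed

lemma sysDF_conv_fst_snd: "sysDF D F = (\<lambda>z. (- snd z + fst z * snd z, fst z + D * (fst z)\<^sup>2 + F * (snd z)\<^sup>2))"
  by (auto simp: sysDF_def fun_eq_iff)

lemma sysDF_lipschitz_on_cball: "\<exists>K. K-lipschitz_on (cball 0 R) (sysDF D F)"
proof -
  let ?B = "cball (0 :: real \<times> real) R"
  have bound: "\<bar>fst z\<bar> \<le> \<bar>R\<bar>" "\<bar>snd z\<bar> \<le> \<bar>R\<bar>" if "z \<in> ?B" for z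
    using that norm_fst_le[of "fst z" "snd z"] norm_snd_le[of "snd z" "fst z"] by auto
  have diff: "\<bar>fst z - fst w\<bar> \<le> dist z w" "\<bar>snd z - snd w\<bar> \<le> dist z w" for z w :: "real \<times> real"
    using dist_fst_le[of z w] dist_snd_le[of z w] by (simp_all add: dist_real_def)
  have x_component: "(1 + 2 * \<bar>R\<bar>)-lipschitz_on ?B (\<lambda>z. - snd z + fst z * snd z)"
  proof (rule lipschitz_onI)
    fix z w assume z: "z \<in> ?B" and w: "w \<in> ?B"
    have "\<bar>fst z - 1\<bar> \<le> 1 + \<bar>R\<bar>" using bound[OF z] by linarith
    then have "\<bar>(fst z - 1) * (snd z - snd w) + snd w * (fst z - fst w)\<bar> \<le> (1 + \<bar>R\<bar> + \<bar>R\<bar>) * dist z w"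
      using bound[OF w] diff by (intro abs_mult_add_mult_le)
    then show "dist (- snd z + fst z * snd z) (- snd w + fst w * snd w) \<le> (1 + 2 * \<bar>R\<bar>) * dist z w"
      by (simp add: dist_real_def algebra_simps)
  qed simp
  have y_component: "(1 + 2 * \<bar>D\<bar> * \<bar>R\<bar> + 2 * \<bar>F\<bar> * \<bar>R\<bar>)-lipschitz_on ?B
      (\<lambda>z. fst z + D * (fst z)\<^sup>2 + F * (snd z)\<^sup>2)"
  proof (rule lipschitz_onI)
    fix z w assume z: "z \<in> ?B" and w: "w \<in> ?B"
    have "\<bar>fst z + fst w\<bar> \<le> 2 * \<bar>R\<bar>" and "\<bar>snd z + snd w\<bar> \<le> 2 * \<bar>R\<bar>"
      using bound[OF z] bound[OF w] by linarith+
    then have "\<bar>1 + D * (fst z + fst w)\<bar> \<le> 1 + 2 * \<bar>D\<bar> * \<bar>R\<bar>" and "\<bar>F * (snd z + snd w)\<bar> \<le> 2 * \<bar>F\<bar> * \<bar>R\<bar>"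
      using mult_left_mono[of _ _ "\<bar>D\<bar>"] mult_left_mono[of _ _ "\<bar>F\<bar>"]
      by (fastforce simp: abs_mult intro: order_trans[OF abs_triangle_ineq])+
    then have "\<bar>(1 + D * (fst z + fst w)) * (fst z - fst w) + F * (snd z + snd w) * (snd z - snd w)\<bar>
        \<le> (1 + 2 * \<bar>D\<bar> * \<bar>R\<bar> + 2 * \<bar>F\<bar> * \<bar>R\<bar>) * dist z w"
      using diff by (intro abs_mult_add_mult_le)
    then show "dist (fst z + D * (fst z)\<^sup>2 + F * (snd z)\<^sup>2) (fst w + D * (fst w)\<^sup>2 + F * (snd w)\<^sup>2)
        \<le> (1 + 2 * \<bar>D\<bar> * \<bar>R\<bar> + 2 * \<bar>F\<bar> * \<bar>R\<bar>) * dist z w"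
      by (simp add: dist_real_def algebra_simps power2_eq_square)
  qed simp
  show ?thesis
    using lipschitz_on_Pair[OF x_component y_component] unfolding sysDF_conv_fst_snd by blast
qed

lemma linear_scale_components: "linear (\<lambda>(x, y). (a * x :: real, c * y :: real))"
  by (rule linearI) (auto simp: algebra_simps)

lemma sysDF_affine_conj:
  fixes D F :: real
  assumes "-1 < D" and "D < 0"
  defines "k \<equiv> sqrt (- D / (D + 1))"
  shows "sysDF (-D - 1) F ((\<lambda>(x, y). (D / (D + 1) * x, k * y)) z + (1 / (D + 1), 0))
       = k *\<^sub>R (\<lambda>(x, y). (D / (D + 1) * x, k * y)) (sysDF D F z)"
proof -
  obtain x y where z: "z = (x, y)" by (cases z)
  have "D + 1 \<noteq> 0" using assms(1) by simp
  have k_sq: "k * (k * t) = - D / (D + 1) * t" for t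
    using assms(1,2) unfolding k_def by (simp add: divide_pos_neg mult.assoc[symmetric])
  define u where "u = (D * x + 1) / (D + 1)"
  have "(D + 1) * u = D * x + 1" using \<open>D + 1 \<noteq> 0\<close> by (simp add: u_def)
  have fst_eq: "- (k * y) + u * (k * y) = k * (D / (D + 1) * (- y + x * y))"
    using \<open>D + 1 \<noteq> 0\<close> by (simp add: u_def field_simps)
  have snd_eq: "u + (- D - 1) * u\<^sup>2 + F * (k * y)\<^sup>2 = k * (k * (x + D * x\<^sup>2 + F * y\<^sup>2))"
  proof -
    have "u + (- D - 1) * u\<^sup>2 = u * (1 - (D + 1) * u)" by (simp add: power2_eq_square algebra_simps)
    also have "\<dots> = - D * x * u" using \<open>(D + 1) * u = D * x + 1\<close> by simp
    also have "\<dots> = - D / (D + 1) * (x + D * x\<^sup>2)"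
      using \<open>D + 1 \<noteq> 0\<close> by (simp add: u_def power2_eq_square field_simps)
    finally show ?thesis
      using k_sq[of "x + D * x\<^sup>2 + F * y\<^sup>2"] k_sq[of "y\<^sup>2"]
      by (simp add: power_mult_distrib power2_eq_square algebra_simps)
  qed
  have "(\<lambda>(x, y). (D / (D + 1) * x, k * y)) z + (1 / (D + 1), 0) = (u, k * y)"
    by (simp add: z u_def add_divide_distrib)
  then have "sysDF (-D - 1) F ((\<lambda>(x, y). (D / (D + 1) * x, k * y)) z + (1 / (D + 1), 0))
      = (- (k * y) + u * (k * y), u + (- D - 1) * u\<^sup>2 + F * (k * y)\<^sup>2)"
    by (simp add: sysDF_def)
  also have "\<dots> = (k * (D / (D + 1) * (- y + x * y)), k * (k * (x + D * x\<^sup>2 + F * y\<^sup>2)))"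
    by (simp only: fst_eq snd_eq)
  also have "\<dots> = k *\<^sub>R (\<lambda>(x, y). (D / (D + 1) * x, k * y)) (sysDF D F z)"
    by (simp add: z sysDF_def)
  finally show ?thesis .
qed

theorem corollary3p3:
  fixes D F :: real
  assumes "-1 < D" and "D < 0"
  shows "(\<lambda>\<Gamma>. (\<lambda>(x, y). ((D * x + 1) / (D + 1), sqrt (- D / (D + 1)) * y)) ` \<Gamma>)
            ` annulus_orbits (sysDF D F) (-1 / D, 0)
         = annulus_orbits (sysDF (-D - 1) F) (0, 0)
       \<and> (\<forall>\<Gamma> \<in> annulus_orbits (sysDF D F) (-1 / D, 0).
            orbit_period (sysDF D F) \<Gamma>
            = sqrt (- D / (D + 1)) * orbit_period (sysDF (-D - 1) F)
                ((\<lambda>(x, y). ((D * x + 1) / (D + 1), sqrt (- D / (D + 1)) * y)) ` \<Gamma>))"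
proof -
  define k where "k = sqrt (- D / (D + 1))"
  define L where "L = (\<lambda>(x, y). (D / (D + 1) * x, k * y))"
  define L' where "L' = (\<lambda>(x, y). ((D + 1) / D * x, inverse k * y))"
  have "k > 0" using assms unfolding k_def by (simp add: divide_neg_pos)
  have "linear L" and "linear L'" unfolding L_def L'_def by (rule linear_scale_components)+
  moreover have "L' (L v) = v" and "L (L' v) = v" for v
    using assms \<open>k > 0\<close> by (auto simp: L_def L'_def split: prod.splits)
  moreover have "sysDF (-D - 1) F (L z + (1 / (D + 1), 0)) = k *\<^sub>R L (sysDF D F z)" for z
    using sysDF_affine_conj[OF assms] unfolding k_def L_def .
  ultimately have "(\<lambda>\<Gamma>. (\<lambda>z. L z + (1 / (D + 1), 0)) ` \<Gamma>) ` annulus_orbits (sysDF D F) (-1 / D, 0)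
      = annulus_orbits (sysDF (-D - 1) F) (L (-1 / D, 0) + (1 / (D + 1), 0))
    \<and> (\<forall>\<Gamma> \<in> annulus_orbits (sysDF D F) (-1 / D, 0). orbit_period (sysDF D F) \<Gamma>
      = k * orbit_period (sysDF (-D - 1) F) ((\<lambda>z. L z + (1 / (D + 1), 0)) ` \<Gamma>))"
    by (intro annulus_orbits_affine_conj sysDF_lipschitz_on_cball \<open>k > 0\<close>)
  moreover have "(\<lambda>(x, y). ((D * x + 1) / (D + 1), k * y)) = (\<lambda>z. L z + (1 / (D + 1), 0))"
    by (auto simp: L_def add_divide_distrib)
  moreover have "L (-1 / D, 0) + (1 / (D + 1), 0) = (0, 0)"
    using assms by (simp add: L_def)
  ultimately show ?thesis unfolding k_def by simp
qed

end
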